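(* Let $(x(n))_{n\geq0}$ and $(y(n))_{n\geq0}$ be sequences of nonnegative integers with $x(0)=1$, $y(0)=0$, such that for every $n \geq 1$ the set $\{x(n), y(n)\}$ consists of the two smallest nonnegative integers not belonging to $\{x(k) : k \leq n-1\} \cup \{y(k) : k \leq n-1\}$, and such that for all $n \geq 0$, $x(x(n))$ and $y(y(n))$ are even while $x(y(n))$ and $y(x(n))$ are odd. Then $x(n) = a(n)$ and $y(n) = b(n)$ for all $n \geq 0$.
   Context: A nonnegative integer is odious if the sum of its binary digits is odd and evil if it is even. $(a(n))_{n\geq0}$ is the increasing sequence of odious numbers and $(b(n))_{n\geq 0}$ the increasing sequence of evil numbers, both indexed from $0$. *)

theory Defs
  imports Main "HOL-Library.Infinite_Set"
begin

fun bitsum :: "nat \<Rightarrow> nat" where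
  "bitsum n = (if n = 0 then 0 else n mod 2 + bitsum (n div 2))"

declare bitsum.simps [simp del]

definition odious :: "nat \<Rightarrow> bool" where
  "odious n \<longleftrightarrow> odd (bitsum n)"

definition evil :: "nat \<Rightarrow> bool" where
  "evil n \<longleftrightarrow> even (bitsum n)"

text \<open>a = increasing enumeration of odious numbers, b = of evil numbers, indexed from 0.\<close>
definition odious_seq :: "nat \<Rightarrow> nat" where
  "odious_seq = enumerate {n. odious n}"

definition evil_seq :: "nat \<Rightarrow> nat" where
  "evil_seq = enumerate {n. evil n}"

definition first_missing :: "nat set \<Rightarrow> nat" where
  "first_missing S = (LEAST m. m \<notin> S)"

definition second_missing :: "nat set \<Rightarrow> nat" where
  "second_missing S = (LEAST m. m \<notin> S \<and> m \<noteq> first_missing S)"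

end

theory Submission
  imports Defs
begin

text \<open>The greedy rule forces by induction that the n-th pair is {2n, 2n+1}, so each m is
  hit exactly once, at index m div 2, and x m is 2m or 2m+1. The parity conditions say that
  x m is even precisely when m is a value of x. Hence m lies in the range of x iff
  x (m div 2) = m iff (m div 2 lies in the range of x \<longleftrightarrow> m is even), which is the
  recursion bitsum m = m mod 2 + bitsum (m div 2) for odious numbers; with x 0 = 1 as base
  case, x enumerates the odious and y the evil numbers.\<close>

lemma enumerate_range_strict_mono:
  fixes f :: "nat \<Rightarrow> nat"
  assumes "strict_mono f"
  shows "enumerate (range f) n = f n"
proof (induction n)
  case 0
  show ?case unfolding enumerate_0
  proof (rule Least_equality)
    show "f 0 \<le> s" if "s \<in> range f" for s
      using that assms by (auto simp: strict_mono_less_eq)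
  qed simp
next
  case (Suc n)
  have "infinite (range f)"
    using assms strict_mono_imp_inj_on finite_imageD infinite_UNIV_nat by blast
  show ?case unfolding enumerate_Suc''[OF \<open>infinite (range f)\<close>] Suc
  proof (rule Least_equality)
    show "f (Suc n) \<le> s" if "s \<in> range f \<and> f n < s" for s
      using that assms by (auto simp: strict_mono_less strict_mono_less_eq)
  qed (use assms in \<open>simp add: strict_mono_less\<close>)
qed

lemma bitsum_eq: "bitsum m = m mod 2 + bitsum (m div 2)"
  by (cases "m = 0") (simp_all add: bitsum.simps[of m] bitsum.simps[of 0])

lemma odious_iff_half: "odious m \<longleftrightarrow> (odious (m div 2) \<longleftrightarrow> even m)"
  unfolding odious_def by (subst bitsum_eq) auto

lemma evil_iff_not_odious: "evil m \<longleftrightarrow> \<not> odious m"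
  by (simp add: evil_def odious_def)

lemma first_missing_atLeastLessThan_double: "first_missing {0..<2*n} = 2*n"
  unfolding first_missing_def by (rule Least_equality) auto

lemma second_missing_atLeastLessThan_double: "second_missing {0..<2*n} = Suc (2*n)"
  unfolding second_missing_def first_missing_atLeastLessThan_double
  by (rule Least_equality) auto

lemma greedy_pairs_eq_consecutive:
  fixes x y :: "nat \<Rightarrow> nat"
  assumes "{x 0, y 0} = {0, 1}"
    and "\<And>n. n \<ge> 1 \<Longrightarrow>
           {x n, y n} = {first_missing ({x k | k. k \<le> n - 1} \<union> {y k | k. k \<le> n - 1}),
                         second_missing ({x k | k. k \<le> n - 1} \<union> {y k | k. k \<le> n - 1})}"
  shows "{x n, y n} = {2*n, Suc (2*n)}"
proof (induction n rule: less_induct)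
  case (less n)
  show ?case
  proof (cases "n = 0")
    case True
    then show ?thesis using assms(1) by simp
  next
    case False
    have "{x k | k. k \<le> n - 1} \<union> {y k | k. k \<le> n - 1} = (\<Union>k<n. {x k, y k})"
      using False by (force intro: le_less_trans[of _ "n - 1"])
    also have "\<dots> = (\<Union>k<n. {2*k, Suc (2*k)})"
      using less by simp
    also have "\<dots> = {0..<2*n}"
    proof (rule set_eqI)
      fix m
      show "m \<in> (\<Union>k<n. {2*k, Suc (2*k)}) \<longleftrightarrow> m \<in> {0..<2*n}"
        by (auto intro!: bexI[of _ "m div 2"])
    qed
    finally show ?thesis
      using assms(2)[of n] False first_missing_atLeastLessThan_double
        second_missing_atLeastLessThan_double by simp
  qed
qed

lemma consecutive_pairs_cases:
  assumes "\<And>n. {x n, y n} = {2*n, Suc (2*n)}"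
  obtains "x n = 2*n" "y n = Suc (2*n)" | "x n = Suc (2*n)" "y n = 2*n"
  using assms[of n] by (auto simp: doubleton_eq_iff)

lemma consecutive_pairs_strict_mono:
  assumes "\<And>n. {x n, y n} = {2*n, Suc (2*n)}"
  shows "strict_mono x" "strict_mono y"
proof -
  have "x n < x (Suc n) \<and> y n < y (Suc n)" for n
    by (cases rule: consecutive_pairs_cases[OF assms, of n];
        cases rule: consecutive_pairs_cases[OF assms, of "Suc n"]) auto
  then show "strict_mono x" "strict_mono y"
    unfolding strict_mono_Suc_iff by simp_all
qed

lemma consecutive_pairs_range_iff:
  assumes "\<And>n. {x n, y n} = {2*n, Suc (2*n)}"
  shows "m \<in> range x \<longleftrightarrow> x (m div 2) = m"
proof
  assume "m \<in> range x"
  then obtain n where "m = x n" by blast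
  moreover have "x n div 2 = n"
    by (cases rule: consecutive_pairs_cases[OF assms, of n]) auto
  ultimately show "x (m div 2) = m" by simp
qed (metis rangeI)

lemma consecutive_pairs_range_compl:
  assumes "\<And>n. {x n, y n} = {2*n, Suc (2*n)}"
  shows "range y = - range x"
proof -
  have "m \<in> range y \<longleftrightarrow> m \<notin> range x" for m
  proof -
    have "y (m div 2) = m \<longleftrightarrow> x (m div 2) \<noteq> m"
      by (cases rule: consecutive_pairs_cases[OF assms, of "m div 2"]) auto
    moreover have "m \<in> range y \<longleftrightarrow> y (m div 2) = m"
      by (rule consecutive_pairs_range_iff[of y x]) (use assms in \<open>simp add: insert_commute\<close>)
    ultimately show ?thesis
      using consecutive_pairs_range_iff[OF assms] by simp
  qed
  then show ?thesis by blast
qed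

lemma consecutive_pairs_even_iff_range:
  assumes pairs: "\<And>n. {x n, y n} = {2*n, Suc (2*n)}"
    and "\<And>n. even (x (x n))" and "\<And>n. odd (x (y n))"
  shows "even (x m) \<longleftrightarrow> m \<in> range x"
proof (cases "m \<in> range x")
  case True
  then show ?thesis using assms(2) by blast
next
  case False
  then have "m \<in> range y" using consecutive_pairs_range_compl[OF pairs] by blast
  then show ?thesis using assms(3) False by blast
qed

lemma consecutive_pairs_range_odious:
  assumes pairs: "\<And>n. {x n, y n} = {2*n, Suc (2*n)}"
    and "x 0 = 1" and "\<And>n. even (x (x n))" and "\<And>n. odd (x (y n))"
  shows "m \<in> range x \<longleftrightarrow> odious m"
proof (induction m rule: less_induct)
  case (less m)
  show ?case
  proof (cases "m = 0")
    case True
    then show ?thesis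
      using consecutive_pairs_range_iff[OF pairs, of 0] assms(2)
      by (simp add: odious_def bitsum.simps)
  next
    case False
    define q where "q = m div 2"
    have "m \<in> range x \<longleftrightarrow> x q = m"
      unfolding q_def by (rule consecutive_pairs_range_iff[OF pairs])
    also have "\<dots> \<longleftrightarrow> (even (x q) \<longleftrightarrow> even m)"
    proof -
      have "m = 2*q \<or> m = Suc (2*q)"
        unfolding q_def by presburger
      then show ?thesis
        by (cases rule: consecutive_pairs_cases[OF pairs, of q]) auto
    qed
    also have "\<dots> \<longleftrightarrow> (odious q \<longleftrightarrow> even m)"
      using consecutive_pairs_even_iff_range[OF pairs assms(3,4)] less[of q] False
      by (simp add: q_def)
    also have "\<dots> \<longleftrightarrow> odious m"
      unfolding q_def by (rule odious_iff_half[symmetric])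
    finally show ?thesis .
  qed
qed

theorem theorem6:
  fixes x y :: "nat \<Rightarrow> nat"
  assumes "x 0 = 1" and "y 0 = 0"
    and "\<And>n. n \<ge> 1 \<Longrightarrow>
           {x n, y n} = {first_missing ({x k | k. k \<le> n - 1} \<union> {y k | k. k \<le> n - 1}),
                         second_missing ({x k | k. k \<le> n - 1} \<union> {y k | k. k \<le> n - 1})}"
    and "\<And>n. even (x (x n))" and "\<And>n. even (y (y n))"
    and "\<And>n. odd (x (y n))" and "\<And>n. odd (y (x n))"
  shows "\<forall>n. x n = odious_seq n \<and> y n = evil_seq n"
proof -
  have pairs: "{x n, y n} = {2*n, Suc (2*n)}" for n
    using greedy_pairs_eq_consecutive[of x y] assms(1-3) by auto
  have range_x: "range x = {n. odious n}"
    using consecutive_pairs_range_odious[OF pairs assms(1,4,6)] by blast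
  have range_y: "range y = {n. evil n}"
    using consecutive_pairs_range_compl[OF pairs] range_x by (auto simp: evil_iff_not_odious)
  show ?thesis
    unfolding odious_seq_def evil_seq_def range_x[symmetric] range_y[symmetric]
    using enumerate_range_strict_mono consecutive_pairs_strict_mono[OF pairs] by simp
qed

end
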